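(* Let $\alpha,\beta,\gamma\in\mathbb{Z}_2^n$, $p=(p_0,p_1,p_2)\in\mathbb{Z}_2^3$ and $a,b,c\in\mathbb{Z}_2$. If $\mathrm{wt}(p)$ is even, then $$\mathrm{cadp}_c(\alpha p_0,\beta p_1,\gamma p_2)=\frac{1}{2^{\mathrm{wt}(p)}}\sum_{q\in\mathbb{Z}_2^3,\ q\preceq p}\mathrm{cadp}_{c\oplus q_2}(\alpha^{[q_0]},\beta^{[q_1]},\gamma^{[q_2]}),$$ $$\mathrm{padp}_{a,b}(\alpha p_0,\beta p_1,\gamma p_2)=\frac{1}{2^{\mathrm{wt}(p)}}\sum_{q\in\mathbb{Z}_2^3,\ q\preceq p}\mathrm{padp}_{a\oplus q_0,b\oplus q_1}(\alpha^{[q_0]},\beta^{[q_1]},\gamma^{[q_2]}).$$ If $\mathrm{wt}(p)$ is odd, then $\mathrm{cadp}_c(\alpha p_0,\beta p_1,\gamma p_2)=\mathrm{padp}_{a,b}(\alpha p_0,\beta p_1,\gamma p_2)=0$.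
   Context: For $x\in\mathbb{Z}_2^n$ and a bit $t$, $xt=(x_0,\dots,x_{n-1},t)\in\mathbb{Z}_2^{n+1}$. $\overline{x}$ is the bitwise complement and $x^{[a]}=x$ if $a=0$, $\overline{x}$ if $a=1$. $\mathrm{wt}$ is Hamming weight and $q\preceq p$ means $q_i\le p_i$ for all $i$. Indices $0,\dots,7$ are identified with $\mathbb{Z}_2^3$ via $(p_0,p_1,p_2)\leftrightarrow4p_0+2p_1+p_2$; $e_0,\dots,e_7$ are the standard basis row vectors of $\mathbb{Q}^8$. $A_0$ is $\frac14$ times the $8\times8$ matrix with rows $(4,0,0,1,0,1,1,0)$, $(0,0,0,1,0,1,0,0)$, $(0,0,0,1,0,0,1,0)$, $(0,0,0,1,0,0,0,0)$, $(0,0,0,0,0,1,1,0)$, $(0,0,0,0,0,1,0,0)$, $(0,0,0,0,0,0,1,0)$, $(0,\dots,0)$, and $(A_k)_{i,j}=(A_0)_{i\oplus k,j\oplus k}$. For $\alpha,\beta,\gamma\in\mathbb{Z}_2^m$ let $\omega_i=4\alpha_i+2\beta_i+\gamma_i$. With $L_0=(1,0,1,0,1,0,1,0)$, $L_1=(0,1,0,1,0,1,0,1)$, $L_{0,0}=(1,1,0,0,0,0,0,0)$, $L_{0,1}=(0,0,1,1,0,0,0,0)$, $L_{1,0}=(0,0,0,0,1,1,0,0)$, $L_{1,1}=(0,0,0,0,0,0,1,1)$, define $\mathrm{cadp}_c(\alpha,\beta,\gamma)=L_cA_{\omega_0}\cdots A_{\omega_{m-1}}e_0^T$ and $\mathrm{padp}_{a,b}(\alpha,\beta,\gamma)=L_{a,b}A_{\omega_0}\cdots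 A_{\omega_{m-1}}e_0^T$. *)

theory Defs
  imports Complex_Main
begin

text \<open>Bits are booleans; vectors in Z_2^m are bool lists of length m (entry i = x_i).
  Indices 0..7 encode (p0,p1,p2) as 4 p0 + 2 p1 + p2.\<close>

definition A0_rows :: "nat list list" where
  "A0_rows = [[4,0,0,1,0,1,1,0],
              [0,0,0,1,0,1,0,0],
              [0,0,0,1,0,0,1,0],
              [0,0,0,1,0,0,0,0],
              [0,0,0,0,0,1,1,0],
              [0,0,0,0,0,1,0,0],
              [0,0,0,0,0,0,1,0],
              [0,0,0,0,0,0,0,0]]"

definition A0 :: "nat \<Rightarrow> nat \<Rightarrow> real" where
  "A0 i j = real (A0_rows ! i ! j) / 4"

definition Amat :: "nat \<Rightarrow> nat \<Rightarrow> nat \<Rightarrow> real" where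
  "Amat k i j = A0 (Bit_Operations.xor i k) (Bit_Operations.xor j k)"

text \<open>prodvec [w0,...,w(m-1)] = A_{w0} ... A_{w(m-1)} e_0^T as a column vector on {0..<8}.\<close>
fun prodvec :: "nat list \<Rightarrow> nat \<Rightarrow> real" where
  "prodvec [] = (\<lambda>j. if j = 0 then 1 else 0)"
| "prodvec (w # ws) = (\<lambda>i. \<Sum>j<8. Amat w i j * prodvec ws j)"

definition omegas :: "bool list \<Rightarrow> bool list \<Rightarrow> bool list \<Rightarrow> nat list" where
  "omegas \<alpha> \<beta> \<gamma> = map (\<lambda>(x, y, z). 4 * of_bool x + 2 * of_bool y + of_bool z) (zip \<alpha> (zip \<beta> \<gamma>))"

definition Lc :: "bool \<Rightarrow> nat \<Rightarrow> real" where
  "Lc c i = (if c then of_bool (odd i) else of_bool (even i))"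

definition Lab :: "bool \<Rightarrow> bool \<Rightarrow> nat \<Rightarrow> real" where
  "Lab a b i = of_bool (i div 2 = 2 * of_bool a + of_bool b)"

definition cadp :: "bool \<Rightarrow> bool list \<Rightarrow> bool list \<Rightarrow> bool list \<Rightarrow> real" where
  "cadp c \<alpha> \<beta> \<gamma> = (\<Sum>i<8. Lc c i * prodvec (omegas \<alpha> \<beta> \<gamma>) i)"

definition padp :: "bool \<Rightarrow> bool \<Rightarrow> bool list \<Rightarrow> bool list \<Rightarrow> bool list \<Rightarrow> real" where
  "padp a b \<alpha> \<beta> \<gamma> = (\<Sum>i<8. Lab a b i * prodvec (omegas \<alpha> \<beta> \<gamma>) i)"

definition bcomp :: "bool \<Rightarrow> bool list \<Rightarrow> bool list" where
  "bcomp a x = (if a then map Not x else x)"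

definition wt3 :: "bool \<times> bool \<times> bool \<Rightarrow> nat" where
  "wt3 p = (case p of (p0, p1, p2) \<Rightarrow> of_bool p0 + of_bool p1 + of_bool p2)"

definition below3 :: "bool \<times> bool \<times> bool \<Rightarrow> (bool \<times> bool \<times> bool) set" where
  "below3 p = {(q0, q1, q2). (q0 \<longrightarrow> fst p) \<and> (q1 \<longrightarrow> fst (snd p)) \<and> (q2 \<longrightarrow> snd (snd p))}"

end

theory Submission
  imports Defs
begin

(* Appending the bits p to alpha, beta, gamma appends w = 4 p0 + 2 p1 + p2 to omega, so the
   matrix product now ends in A_w e_0, whose entries are (A_0)_{q xor w, w}. Column w of A_0 is
   2^-wt(w) times the indicator of {q. q <= w} if wt(w) is even and zero otherwise, hence
   A_w e_0 = [wt(w) even] 2^-wt(w) * sum_{q <= w} e_q.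
   With P_q the permutation matrix of j |-> j xor q we have e_q = P_q e_0 and A_v P_q = P_q A_{v xor q},
   so A_omega e_q = P_q A_{omega xor q} e_0, where omega xor q is the index sequence of the
   complemented vectors alpha^[q0], beta^[q1], gamma^[q2]. Finally the row vectors absorb P_q:
   L_c P_q = L_{c xor q2} and L_{a,b} P_q = L_{a xor q0, b xor q1}. *)

lemma xor_nat_less_power:
  fixes i k :: nat
  assumes "i < 2 ^ n" and "k < 2 ^ n"
  shows "Bit_Operations.xor i k < 2 ^ n"
proof -
  have "take_bit n i = i" "take_bit n k = k"
    using assms by (simp_all add: take_bit_nat_eq_self_iff)
  then have "Bit_Operations.xor i k = take_bit n (Bit_Operations.xor i k)"
    by simp
  also have "\<dots> < 2 ^ n"
    by (rule take_bit_nat_less_exp)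
  finally show ?thesis .
qed

lemma xor_right_self [simp]:
  fixes i k :: "'a::semiring_bit_operations"
  shows "Bit_Operations.xor (Bit_Operations.xor i k) k = i"
  by (simp add: xor.assoc)

lemma xor_left_self [simp]:
  fixes i k :: "'a::semiring_bit_operations"
  shows "Bit_Operations.xor k (Bit_Operations.xor k i) = i"
  by (simp flip: xor.assoc)

lemma xor_eq_0_iff:
  fixes i k :: "'a::semiring_bit_operations"
  shows "Bit_Operations.xor i k = 0 \<longleftrightarrow> i = k"
  by (metis xor_right_self xor.left_neutral xor_self_eq)

lemma sum_lessThan_power_xor:
  fixes f :: "nat \<Rightarrow> 'a::comm_monoid_add"
  assumes "k < 2 ^ n"
  shows "(\<Sum>i<2 ^ n. f (Bit_Operations.xor i k)) = (\<Sum>i<2 ^ n. f i)"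
  by (rule sum.reindex_bij_witness[where i="\<lambda>j. Bit_Operations.xor j k" and j="\<lambda>j. Bit_Operations.xor j k"])
    (use assms in \<open>auto simp: xor_nat_less_power\<close>)

lemma sum_lessThan_8_xor:
  fixes f :: "nat \<Rightarrow> 'a::comm_monoid_add"
  assumes "k < 8"
  shows "(\<Sum>i<8. f (Bit_Operations.xor i k)) = (\<Sum>i<8. f i)"
  using sum_lessThan_power_xor[of k 3 f] assms by simp

definition index3 :: "bool \<times> bool \<times> bool \<Rightarrow> nat" where
  "index3 = (\<lambda>(x, y, z). 4 * of_bool x + 2 * of_bool y + of_bool z)"

lemma index3_simps [simp]:
  "index3 (False, False, False) = 0" "index3 (False, False, True) = 1"
  "index3 (False, True, False) = 2" "index3 (False, True, True) = 3"
  "index3 (True, False, False) = 4" "index3 (True, False, True) = 5"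
  "index3 (True, True, False) = 6" "index3 (True, True, True) = 7"
  by (simp_all add: index3_def)

lemma omegas_eq_map_index3: "omegas \<alpha> \<beta> \<gamma> = map index3 (zip \<alpha> (zip \<beta> \<gamma>))"
  unfolding omegas_def index3_def ..

lemma index3_range: "range index3 = {..<8}"
proof -
  have "(UNIV :: bool set) = {False, True}"
    by auto
  then have "range index3 = index3 ` ({False, True} \<times> {False, True} \<times> {False, True})"
    by (simp flip: UNIV_Times_UNIV)
  also have "\<dots> = {0, 1, 2, 3, 4, 5, 6, 7}"
    by (auto simp: index3_def)
  also have "\<dots> = {..<8}"
    by auto
  finally show ?thesis .
qed

lemma index3_less_8: "index3 t < 8"
  using index3_range by auto

lemma inj_index3: "inj index3"
proof -
  have "card (UNIV :: (bool \<times> bool \<times> bool) set) = 8"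
    by (simp add: card_UNIV_bool card_cartesian_product flip: UNIV_Times_UNIV)
  then have "card (range index3) = card (UNIV :: (bool \<times> bool \<times> bool) set)"
    by (simp add: index3_range)
  then show ?thesis
    by (simp add: inj_on_iff_eq_card)
qed

lemma xor_index3:
  "Bit_Operations.xor (index3 (x, y, z)) (index3 (a, b, c)) = index3 (x \<noteq> a, y \<noteq> b, z \<noteq> c)"
  by (cases x; cases y; cases z; cases a; cases b; cases c; simp add: numeral_3_eq_3[symmetric] numeral_2_eq_2[symmetric])

lemma Lc_index3: "Lc c (index3 (x, y, z)) = of_bool (c = z)"
  by (cases x; cases y; cases z; cases c; simp add: Lc_def)

lemma Lab_index3: "Lab a b (index3 (x, y, z)) = of_bool (a = x \<and> b = y)"
  by (cases x; cases y; cases z; cases a; cases b; simp add: Lab_def)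

lemma A0_index3:
  "A0 (index3 (x, y, z)) (index3 (a, b, c)) =
    (if even (wt3 (a, b, c)) \<and> (x, y, z) \<in> below3 (a, b, c) then 1 / 2 ^ wt3 (a, b, c) else 0)"
  by (cases x; cases y; cases z; cases a; cases b; cases c; simp add: A0_def A0_rows_def wt3_def below3_def)

lemma Amat_index3_col0:
  "Amat (index3 p) (index3 q) 0 = (if even (wt3 p) \<and> q \<in> below3 p then 1 / 2 ^ wt3 p else 0)"
proof -
  obtain a b c x y z where p: "p = (a, b, c)" and q: "q = (x, y, z)"
    by (cases p; cases q)
  have "(x \<noteq> a, y \<noteq> b, z \<noteq> c) \<in> below3 (a, b, c) \<longleftrightarrow> (x, y, z) \<in> below3 (a, b, c)"
    by (auto simp: below3_def)
  then show ?thesis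
    by (simp add: p q Amat_def xor_index3 A0_index3)
qed

lemma Amat_shift:
  "Amat w i (Bit_Operations.xor j k) = Amat (Bit_Operations.xor w k) (Bit_Operations.xor i k) j"
  by (simp add: Amat_def ac_simps)

fun Aprod_mult :: "nat list \<Rightarrow> (nat \<Rightarrow> real) \<Rightarrow> nat \<Rightarrow> real" where
  "Aprod_mult [] v = v"
| "Aprod_mult (w # ws) v = (\<lambda>i. \<Sum>j<8. Amat w i j * Aprod_mult ws v j)"

lemma prodvec_append: "prodvec (ws @ vs) = Aprod_mult ws (prodvec vs)"
  by (induction ws) simp_all

lemma Aprod_mult_cong:
  assumes "\<And>j. j < 8 \<Longrightarrow> u j = v j" and "i < 8"
  shows "Aprod_mult ws u i = Aprod_mult ws v i"
  using assms(2) by (induction ws arbitrary: i) (simp_all add: assms(1))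

lemma Aprod_mult_sum:
  "Aprod_mult ws (\<lambda>j. \<Sum>q\<in>Q. c q * u q j) i = (\<Sum>q\<in>Q. c q * Aprod_mult ws (u q) i)"
proof (induction ws arbitrary: i)
  case Nil
  show ?case by simp
next
  case (Cons w ws)
  have "Aprod_mult (w # ws) (\<lambda>j. \<Sum>q\<in>Q. c q * u q j) i =
      (\<Sum>j<8. \<Sum>q\<in>Q. Amat w i j * (c q * Aprod_mult ws (u q) j))"
    by (simp add: Cons.IH sum_distrib_left)
  also have "\<dots> = (\<Sum>q\<in>Q. c q * (\<Sum>j<8. Amat w i j * Aprod_mult ws (u q) j))"
    by (subst sum.swap) (simp add: sum_distrib_left mult.left_commute)
  finally show ?case by simp
qed

lemma Aprod_mult_xor_shift:
  assumes "k < 8"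
  shows "Aprod_mult ws (\<lambda>j. v (Bit_Operations.xor j k)) i =
    Aprod_mult (map (\<lambda>w. Bit_Operations.xor w k) ws) v (Bit_Operations.xor i k)"
proof (induction ws arbitrary: i)
  case Nil
  show ?case by simp
next
  case (Cons w ws)
  let ?P = "Aprod_mult (map (\<lambda>w. Bit_Operations.xor w k) ws) v"
  have "Aprod_mult (w # ws) (\<lambda>j. v (Bit_Operations.xor j k)) i =
      (\<Sum>j<8. Amat w i j * ?P (Bit_Operations.xor j k))"
    by (simp add: Cons.IH)
  also have "\<dots> = (\<Sum>j<8. Amat w i (Bit_Operations.xor j k) * ?P j)"
    using sum_lessThan_8_xor[OF assms, of "\<lambda>j. Amat w i (Bit_Operations.xor j k) * ?P j"]
    by simp
  finally show ?case
    by (simp add: Amat_shift)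
qed

(* prodvec [] (j xor k) is the j-th entry of the unit vector e_k. The bound j < 8 is needed
   because A0 is unspecified outside 0..7. *)
lemma Amat_col0_eq_sum:
  assumes "j < 8"
  shows "Amat (index3 p) j 0 =
    (\<Sum>q\<in>below3 p. (if even (wt3 p) then 1 / 2 ^ wt3 p else 0) * prodvec [] (Bit_Operations.xor j (index3 q)))"
proof -
  obtain t where j: "j = index3 t"
    using assms index3_range by (metis lessThan_iff rangeE)
  have "prodvec [] (Bit_Operations.xor j (index3 q)) = of_bool (t = q)" for q
    using inj_index3 by (simp add: j xor_eq_0_iff inj_eq)
  then show ?thesis
    by (simp add: j Amat_index3_col0 of_bool_def sum.delta flip: sum_distrib_left)
qed

lemma prodvec_snoc_index3:
  assumes "i < 8"
  shows "prodvec (ws @ [index3 p]) i =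
    (if even (wt3 p) then 1 / 2 ^ wt3 p else 0) *
      (\<Sum>q\<in>below3 p. prodvec (map (\<lambda>w. Bit_Operations.xor w (index3 q)) ws) (Bit_Operations.xor i (index3 q)))"
proof -
  let ?c = "if even (wt3 p) then 1 / 2 ^ wt3 p else (0::real)"
  have "prodvec [index3 p] = (\<lambda>j. Amat (index3 p) j 0)"
    by (simp add: if_distrib cong: if_cong)
  then have "prodvec (ws @ [index3 p]) i = Aprod_mult ws (\<lambda>j. Amat (index3 p) j 0) i"
    by (simp add: prodvec_append)
  also have "\<dots> = Aprod_mult ws (\<lambda>j. \<Sum>q\<in>below3 p. ?c * prodvec [] (Bit_Operations.xor j (index3 q))) i"
    using assms by (intro Aprod_mult_cong Amat_col0_eq_sum)
  also have "\<dots> = (\<Sum>q\<in>below3 p. ?c * prodvec (map (\<lambda>w. Bit_Operations.xor w (index3 q)) ws) (Bit_Operations.xor i (index3 q)))"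
    by (simp only: Aprod_mult_sum Aprod_mult_xor_shift[OF index3_less_8] prodvec_append[symmetric] append_Nil2)
  finally show ?thesis
    by (simp add: sum_distrib_left)
qed

lemma omegas_snoc:
  assumes "length \<alpha> = length \<beta>" and "length \<beta> = length \<gamma>"
  shows "omegas (\<alpha> @ [x]) (\<beta> @ [y]) (\<gamma> @ [z]) = omegas \<alpha> \<beta> \<gamma> @ [index3 (x, y, z)]"
  using assms by (simp add: omegas_eq_map_index3)

lemma bcomp_eq_map: "bcomp a x = map (\<lambda>b. b \<noteq> a) x"
  by (simp add: bcomp_def)

lemma omegas_bcomp:
  "omegas (bcomp a \<alpha>) (bcomp b \<beta>) (bcomp c \<gamma>) =
    map (\<lambda>w. Bit_Operations.xor w (index3 (a, b, c))) (omegas \<alpha> \<beta> \<gamma>)"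
  by (auto simp: omegas_eq_map_index3 bcomp_eq_map zip_map1 zip_map2 xor_index3 split: prod.split)

lemma Lc_xor_index3:
  assumes "i < 8"
  shows "Lc c (Bit_Operations.xor i (index3 (q0, q1, q2))) = Lc (c \<noteq> q2) i"
proof -
  obtain x y z where "i = index3 (x, y, z)"
    using assms index3_range by (metis lessThan_iff rangeE prod_cases3)
  then show ?thesis
    by (auto simp: xor_index3 Lc_index3)
qed

lemma Lab_xor_index3:
  assumes "i < 8"
  shows "Lab a b (Bit_Operations.xor i (index3 (q0, q1, q2))) = Lab (a \<noteq> q0) (b \<noteq> q1) i"
proof -
  obtain x y z where "i = index3 (x, y, z)"
    using assms index3_range by (metis lessThan_iff rangeE prod_cases3)
  then show ?thesis
    by (auto simp: xor_index3 Lab_index3)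
qed

lemma sum_weighted_prodvec_snoc:
  assumes "length \<alpha> = length \<beta>" and "length \<beta> = length \<gamma>"
  shows "(\<Sum>i<8. L i * prodvec (omegas (\<alpha> @ [p0]) (\<beta> @ [p1]) (\<gamma> @ [p2])) i) =
    (if even (wt3 (p0, p1, p2)) then 1 / 2 ^ wt3 (p0, p1, p2) else 0) *
    (\<Sum>(q0, q1, q2)\<in>below3 (p0, p1, p2). \<Sum>i<8.
       L (Bit_Operations.xor i (index3 (q0, q1, q2))) * prodvec (omegas (bcomp q0 \<alpha>) (bcomp q1 \<beta>) (bcomp q2 \<gamma>)) i)"
proof -
  let ?c = "if even (wt3 (p0, p1, p2)) then 1 / 2 ^ wt3 (p0, p1, p2) else (0::real)"
  define P where "P q = prodvec (map (\<lambda>w. Bit_Operations.xor w (index3 q)) (omegas \<alpha> \<beta> \<gamma>))" for q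
  have "(\<Sum>i<8. L i * prodvec (omegas (\<alpha> @ [p0]) (\<beta> @ [p1]) (\<gamma> @ [p2])) i) =
      (\<Sum>i<8. L i * (?c * (\<Sum>q\<in>below3 (p0, p1, p2). P q (Bit_Operations.xor i (index3 q)))))"
    using assms by (simp add: omegas_snoc prodvec_snoc_index3 P_def)
  also have "\<dots> = ?c * (\<Sum>q\<in>below3 (p0, p1, p2). \<Sum>i<8. L i * P q (Bit_Operations.xor i (index3 q)))"
    by (subst sum.swap) (simp add: sum_distrib_left ac_simps)
  also have "\<dots> = ?c * (\<Sum>q\<in>below3 (p0, p1, p2). \<Sum>i<8. L (Bit_Operations.xor i (index3 q)) * P q i)"
  proof -
    have "(\<Sum>i<8. L i * P q (Bit_Operations.xor i (index3 q))) =
        (\<Sum>i<8. L (Bit_Operations.xor i (index3 q)) * P q i)" for q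
      using sum_lessThan_8_xor[OF index3_less_8, of "\<lambda>i. L (Bit_Operations.xor i (index3 q)) * P q i" q]
      by simp
    then show ?thesis
      by simp
  qed
  finally show ?thesis
    by (simp add: P_def omegas_bcomp split_def)
qed

lemma cadp_snoc:
  assumes "length \<alpha> = length \<beta>" and "length \<beta> = length \<gamma>"
  shows "cadp c (\<alpha> @ [p0]) (\<beta> @ [p1]) (\<gamma> @ [p2]) =
    (if even (wt3 (p0, p1, p2)) then 1 / 2 ^ wt3 (p0, p1, p2) else 0) *
    (\<Sum>(q0, q1, q2)\<in>below3 (p0, p1, p2). cadp (c \<noteq> q2) (bcomp q0 \<alpha>) (bcomp q1 \<beta>) (bcomp q2 \<gamma>))"
  unfolding cadp_def sum_weighted_prodvec_snoc[OF assms]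
  by (auto intro!: sum.cong simp: Lc_xor_index3 split: prod.split)

lemma padp_snoc:
  assumes "length \<alpha> = length \<beta>" and "length \<beta> = length \<gamma>"
  shows "padp a b (\<alpha> @ [p0]) (\<beta> @ [p1]) (\<gamma> @ [p2]) =
    (if even (wt3 (p0, p1, p2)) then 1 / 2 ^ wt3 (p0, p1, p2) else 0) *
    (\<Sum>(q0, q1, q2)\<in>below3 (p0, p1, p2). padp (a \<noteq> q0) (b \<noteq> q1) (bcomp q0 \<alpha>) (bcomp q1 \<beta>) (bcomp q2 \<gamma>))"
  unfolding padp_def sum_weighted_prodvec_snoc[OF assms]
  by (auto intro!: sum.cong simp: Lab_xor_index3 split: prod.split)

theorem theorem3:
  fixes \<alpha> \<beta> \<gamma> :: "bool list" and n :: nat and p0 p1 p2 a b c :: bool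
  assumes "length \<alpha> = n" and "length \<beta> = n" and "length \<gamma> = n"
  shows "(even (wt3 (p0, p1, p2)) \<longrightarrow>
            cadp c (\<alpha> @ [p0]) (\<beta> @ [p1]) (\<gamma> @ [p2]) =
              1 / 2 ^ wt3 (p0, p1, p2) *
              (\<Sum>(q0, q1, q2)\<in>below3 (p0, p1, p2).
                  cadp (c \<noteq> q2) (bcomp q0 \<alpha>) (bcomp q1 \<beta>) (bcomp q2 \<gamma>))
          \<and> padp a b (\<alpha> @ [p0]) (\<beta> @ [p1]) (\<gamma> @ [p2]) =
              1 / 2 ^ wt3 (p0, p1, p2) *
              (\<Sum>(q0, q1, q2)\<in>below3 (p0, p1, p2).
                  padp (a \<noteq> q0) (b \<noteq> q1) (bcomp q0 \<alpha>) (bcomp q1 \<beta>) (bcomp q2 \<gamma>)))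
        \<and> (odd (wt3 (p0, p1, p2)) \<longrightarrow>
            cadp c (\<alpha> @ [p0]) (\<beta> @ [p1]) (\<gamma> @ [p2]) = 0
          \<and> padp a b (\<alpha> @ [p0]) (\<beta> @ [p1]) (\<gamma> @ [p2]) = 0)"
proof -
  have lengths: "length \<alpha> = length \<beta>" "length \<beta> = length \<gamma>"
    using assms by simp_all
  show ?thesis
    using cadp_snoc[OF lengths, of c] padp_snoc[OF lengths, of a b] by simp
qed

end
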